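(* Let $f:\mathcal{P}_2(H)\to U$ and let $X_0\in L^2(\Omega,H)$ with $\mathcal{L}(X_0)=\sum_{k=1}^N p_k\delta_{x_k}$ for some $N\in\mathbb{N}$, distinct points $x_1,\dots,x_N\in H$ and $p_k>0$ with $\sum_k p_k=1$. Assume the lift $\hat f(X)=f(\mathcal{L}(X))$ is Fréchet differentiable at $X_0$ with $D\hat f(X_0)\in\Lambda_2^{\mathbb{P}}(H,U)$, and let $m(A)u:=D\hat f(X_0)(u\mathbf{1}_A)$ be the associated vector measure. Then for all $A\in\mathcal{F}$ and $u\in H$, $$m(A)u=\int \mathbb{P}(A\mid X_0)\,u\,dm,$$ where $\mathbb{P}(A\mid X_0)=\mathbb{E}[\mathbf{1}_A\mid X_0]$.
   Context: $(\Omega,\mathcal{F},\mathbb{P})$ is a complete atomless probability space, $\Omega$ Polish with Borel $\sigma$-field $\mathcal{F}$; $H,U$ separable real Hilbert spaces. For bounded linear $L:L^2(\Omega,H)\to U$, $|\!|\!|L|\!|\!|_{2,\mathbb{P}}:=\sup\{\sum_{i}\|L(\mathbf{1}_{A_i}x_i)\|_U: \sum_i\mathbf{1}_{A_i}x_i \text{ step function with pairwise disjoint } A_i\in\mathcal{F},\ x_i\in H,\ \mathbb{E}\|\sum_i\mathbf{1}_{A_i}x_i\|_H^2\le1\}$ and $\Lambda_2^{\mathbb{P}}(H,U)$ is the set of such $L$ with finite norm. For $L\in\Lambda_2^{\mathbb{P}}(H,U)$ the map $m(A)u=L(u\mathbf{1}_A)$ is a countably additive vector measure $\mathcal{F}\to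 L(H,U)$; its integral is $\int\sum_i\mathbf{1}_{A_i}x_i\,dm=\sum_i m(A_i)x_i$ on step functions, extended to $Y\in L^2(\Omega,H)$ as $\lim_n\int Y_n\,dm$ for step functions $Y_n\to Y$ in $L^2$ and a.s. *)

theory Defs
  imports "HOL-Probability.Probability"
begin

definition memL2 :: "'w measure \<Rightarrow> ('w \<Rightarrow> 'h::real_normed_vector) \<Rightarrow> bool" where
  "memL2 M Y \<longleftrightarrow> Y \<in> borel_measurable M \<and> integrable M (\<lambda>w. (norm (Y w))\<^sup>2)"

definition l2norm :: "'w measure \<Rightarrow> ('w \<Rightarrow> 'h::real_normed_vector) \<Rightarrow> real" where
  "l2norm M Y = sqrt (\<integral>w. (norm (Y w))\<^sup>2 \<partial>M)"

definition bounded_linear_L2 :: "'w measure \<Rightarrow> (('w \<Rightarrow> 'h::real_normed_vector) \<Rightarrow> 'u::real_normed_vector) \<Rightarrow> bool" where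
  "bounded_linear_L2 M L \<longleftrightarrow>
     (\<forall>Y Z. memL2 M Y \<longrightarrow> memL2 M Z \<longrightarrow> L (\<lambda>w. Y w + Z w) = L Y + L Z) \<and>
     (\<forall>Y c. memL2 M Y \<longrightarrow> L (\<lambda>w. c *\<^sub>R Y w) = c *\<^sub>R L Y) \<and>
     (\<exists>K. \<forall>Y. memL2 M Y \<longrightarrow> norm (L Y) \<le> K * l2norm M Y)"

definition step_fun :: "('w set \<times> 'h::real_vector) list \<Rightarrow> 'w \<Rightarrow> 'h" where
  "step_fun xs w = (\<Sum>(A, x)\<leftarrow>xs. indicator A w *\<^sub>R x)"

definition step_rep :: "'w measure \<Rightarrow> ('w set \<times> 'h) list \<Rightarrow> bool" where
  "step_rep M xs \<longleftrightarrow> (\<forall>i<length xs. fst (xs ! i) \<in> sets M) \<and>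
     disjoint_family_on (\<lambda>i. fst (xs ! i)) {..<length xs}"

text \<open>The space Lambda_2^P(H,U): bounded linear L with finite triple norm.\<close>
definition Lambda2 :: "'w measure \<Rightarrow> (('w \<Rightarrow> 'h::real_normed_vector) \<Rightarrow> 'u::real_normed_vector) \<Rightarrow> bool" where
  "Lambda2 M L \<longleftrightarrow> bounded_linear_L2 M L \<and>
     (\<exists>C. \<forall>xs. step_rep M xs \<longrightarrow> (\<integral>w. (norm (step_fun xs w))\<^sup>2 \<partial>M) \<le> 1 \<longrightarrow>
        (\<Sum>(A, x)\<leftarrow>xs. norm (L (\<lambda>w. indicator A w *\<^sub>R x))) \<le> C)"

definition vmeasure :: "(('w \<Rightarrow> 'h::real_vector) \<Rightarrow> 'u) \<Rightarrow> 'w set \<Rightarrow> 'h \<Rightarrow> 'u" where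
  "vmeasure L A u = L (\<lambda>w. indicator A w *\<^sub>R u)"

definition step_int :: "(('w \<Rightarrow> 'h::real_vector) \<Rightarrow> 'u::real_vector) \<Rightarrow> ('w set \<times> 'h) list \<Rightarrow> 'u" where
  "step_int L xs = (\<Sum>(A, x)\<leftarrow>xs. vmeasure L A x)"

definition vm_integral :: "'w measure \<Rightarrow> (('w \<Rightarrow> 'h::real_normed_vector) \<Rightarrow> 'u::real_normed_vector)
    \<Rightarrow> ('w \<Rightarrow> 'h) \<Rightarrow> 'u" where
  "vm_integral M L Y = (THE v. \<forall>Ys. (\<forall>n. step_rep M (Ys n)) \<longrightarrow>
       (\<lambda>n. l2norm M (\<lambda>w. step_fun (Ys n) w - Y w)) \<longlonglongrightarrow> 0 \<longrightarrow>
       (AE w in M. (\<lambda>n. step_fun (Ys n) w) \<longlonglongrightarrow> Y w) \<longrightarrow>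
       (\<lambda>n. step_int L (Ys n)) \<longlonglongrightarrow> v)"

definition lift_frechet :: "'w measure \<Rightarrow> ('h::{real_normed_vector,second_countable_topology} measure \<Rightarrow> 'u::real_normed_vector)
    \<Rightarrow> ('w \<Rightarrow> 'h) \<Rightarrow> (('w \<Rightarrow> 'h) \<Rightarrow> 'u) \<Rightarrow> bool" where
  "lift_frechet M f X0 L \<longleftrightarrow> bounded_linear_L2 M L \<and>
     (\<forall>e>0. \<exists>d>0. \<forall>Y. memL2 M Y \<longrightarrow> l2norm M Y < d \<longrightarrow>
        norm (f (distr M borel (\<lambda>w. X0 w + Y w)) - f (distr M borel X0) - L Y) \<le> e * l2norm M Y)"

definition atomless :: "'w measure \<Rightarrow> bool" where
  "atomless M \<longleftrightarrow> (\<forall>A\<in>sets M. 0 < measure M A \<longrightarrow>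
     (\<exists>B\<in>sets M. B \<subseteq> A \<and> 0 < measure M B \<and> measure M B < measure M A))"

end

theory Submission
  imports Defs
begin

(* Let B_y be the event {X0 = y} for an atom y of the law of X0. The law of X0 + t 1_C u only
   depends on P(C) as long as C is a subset of B_y, and f sees only laws; hence the Frechet derivative
   satisfies L(1_C u) = L(1_C' u) whenever C, C' are subsets of B_y of equal measure. Since P is
   atomless, every value in [0, P(B_y)] is the measure of such a subset, so C |-> L(1_C u) is an
   additive function of P(C) bounded by K |u| sqrt(P(C)), hence linear:
   L(1_(A inter B_y) u) = P(A | B_y) L(1_(B_y) u). Summing over the atoms gives
   L(1_A u) = L(h u) with h = sum_y P(A | B_y) 1_(B_y), which is a version of P(A | X0); as h u is a
   step function, its integral against m is L(h u). *)

section \<open>Atomless measures\<close>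

lemma (in finite_measure) atomless_small_subset:
  assumes "atomless M" "A \<in> sets M" "0 < measure M A" "0 < e"
  obtains B where "B \<in> sets M" "B \<subseteq> A" "0 < measure M B" "measure M B < e"
proof -
  have halving: "\<exists>B\<in>sets M. B \<subseteq> A \<and> 0 < measure M B \<and> measure M B \<le> measure M A / 2^n" for n
  proof (induction n)
    case 0 show ?case using assms by auto
  next
    case (Suc n)
    then obtain B where B: "B \<in> sets M" "B \<subseteq> A" "0 < measure M B" "measure M B \<le> measure M A / 2^n"
      by blast
    then obtain C where C: "C \<in> sets M" "C \<subseteq> B" "0 < measure M C" "measure M C < measure M B"
      using assms(1) unfolding atomless_def by blast
    have "measure M (B - C) = measure M B - measure M C" using finite_measure_Diff C B by simp
    moreover have "measure M B / 2 \<le> measure M A / 2^(Suc n)" using B(4) by (simp add: field_simps)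
    ultimately show ?case
    proof (cases "measure M C \<le> measure M B / 2")
      case True then show ?thesis using B C by (intro bexI[of _ C]) auto
    next
      case False then show ?thesis using B C \<open>measure M (B - C) = _\<close> by (intro bexI[of _ "B - C"]) auto
    qed
  qed
  obtain n where "measure M A / e < 2^n" using real_arch_pow[of 2 "measure M A / e"] by auto
  then have "measure M A / 2^n < e" using assms(4) by (simp add: field_simps)
  with halving[of n] that show ?thesis by fastforce
qed

lemma (in finite_measure) exists_half_maximal_extension:
  assumes "C \<in> sets M" "C \<subseteq> A" "A \<in> sets M" "measure M C \<le> t"
  shows "\<exists>C'\<in>sets M. C \<subseteq> C' \<and> C' \<subseteq> A \<and> measure M C' \<le> t \<and>
    (\<forall>E\<in>sets M. E \<subseteq> A - C \<longrightarrow> measure M C + measure M E \<le> t \<longrightarrow>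
       measure M E \<le> 2 * (measure M C' - measure M C))"
proof -
  define S where "S = {measure M E | E. E \<in> sets M \<and> E \<subseteq> A - C \<and> measure M C + measure M E \<le> t}"
  have "0 \<in> S" unfolding S_def using assms by (intro CollectI exI[of _ "{}"]) auto
  have "s \<le> t" if "s \<in> S" for s
  proof -
    from that obtain E where "s = measure M E" "measure M C + measure M E \<le> t" unfolding S_def by blast
    moreover have "0 \<le> measure M C" by simp
    ultimately show ?thesis by linarith
  qed
  then have bdd: "bdd_above S" by (rule bdd_aboveI)
  have "\<exists>D\<in>sets M. D \<subseteq> A - C \<and> measure M C + measure M D \<le> t \<and> Sup S \<le> 2 * measure M D"
  proof (cases "Sup S \<le> 0")
    case True then show ?thesis using assms by (intro bexI[of _ "{}"]) auto
  next
    case False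
    then obtain y where "y \<in> S" "Sup S / 2 < y" using less_cSup_iff[OF _ bdd, of "Sup S / 2"] \<open>0 \<in> S\<close>
      by fastforce
    then obtain E where "E \<in> sets M" "E \<subseteq> A - C" "measure M C + measure M E \<le> t" "Sup S / 2 < measure M E"
      unfolding S_def by blast
    then show ?thesis by (intro bexI[of _ E]) auto
  qed
  then obtain D where D: "D \<in> sets M" "D \<subseteq> A - C" "measure M C + measure M D \<le> t" "Sup S \<le> 2 * measure M D"
    by blast
  have "measure M (C \<union> D) = measure M C + measure M D"
    using D assms by (intro finite_measure_Union) auto
  moreover have "measure M E \<le> Sup S" if "E \<in> sets M" "E \<subseteq> A - C" "measure M C + measure M E \<le> t" for E
    using that bdd by (intro cSup_upper) (auto simp: S_def)
  ultimately show ?thesis using D assms by (intro bexI[of _ "C \<union> D"]) force+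
qed

(* Greedy exhaustion: each step gains at least half of what is still possible, so the gains tend
   to 0, and a leftover set of positive measure that still fits below t would contradict this. *)
lemma (in finite_measure) atomless_exists_subset_measure:
  assumes "atomless M" "A \<in> sets M" "0 \<le> t" "t \<le> measure M A"
  obtains C where "C \<in> sets M" "C \<subseteq> A" "measure M C = t"
proof -
  let ?P = "\<lambda>C. C \<in> sets M \<and> C \<subseteq> A \<and> measure M C \<le> t"
  obtain Cs where Cs: "\<And>n. ?P (Cs n)" "\<And>n. Cs n \<subseteq> Cs (Suc n)"
    and half: "\<And>n E. E \<in> sets M \<Longrightarrow> E \<subseteq> A - Cs n \<Longrightarrow> measure M (Cs n) + measure M E \<le> t \<Longrightarrow>
       measure M E \<le> 2 * (measure M (Cs (Suc n)) - measure M (Cs n))"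
    using dependent_nat_choice[of "\<lambda>_. ?P" "\<lambda>_ C C'. C \<subseteq> C' \<and> (\<forall>E\<in>sets M. E \<subseteq> A - C \<longrightarrow>
        measure M C + measure M E \<le> t \<longrightarrow> measure M E \<le> 2 * (measure M C' - measure M C))"]
      exists_half_maximal_extension assms by (metis empty_subsetI measure_empty sets.empty_sets)
  define C where "C = (\<Union>n. Cs n)"
  have C: "C \<in> sets M" "C \<subseteq> A" using Cs unfolding C_def by auto
  have lim: "(\<lambda>n. measure M (Cs n)) \<longlonglongrightarrow> measure M C"
    unfolding C_def using Cs by (intro finite_Lim_measure_incseq incseq_SucI) auto
  then have gaps: "(\<lambda>n. 2 * (measure M (Cs (Suc n)) - measure M (Cs n))) \<longlonglongrightarrow> 2 * (measure M C - measure M C)"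
    by (intro tendsto_intros LIMSEQ_Suc)
  have Ct: "measure M C \<le> t" using Cs by (intro LIMSEQ_le_const2[OF lim]) auto
  have "\<not> measure M C < t"
  proof
    assume "measure M C < t"
    moreover have "measure M (A - C) = measure M A - measure M C" using finite_measure_Diff C assms by simp
    ultimately obtain E where E: "E \<in> sets M" "E \<subseteq> A - C" "0 < measure M E" "measure M E < t - measure M C"
      using atomless_small_subset[OF assms(1), of "A - C" "t - measure M C"] C assms by auto
    have "measure M E \<le> 2 * (measure M (Cs (Suc n)) - measure M (Cs n))" for n
    proof (rule half)
      have "measure M (Cs n) \<le> measure M C" using C unfolding C_def by (intro finite_measure_mono) auto
      then show "measure M (Cs n) + measure M E \<le> t" using E by simp
    qed (use E in \<open>auto simp: C_def\<close>)
    then have "measure M E \<le> 2 * (measure M C - measure M C)"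
      by (intro LIMSEQ_le_const[OF gaps]) auto
    with E show False by simp
  qed
  with C Ct that show ?thesis by simp
qed

section \<open>Additive functions of the measure\<close>

lemma additive_on_interval_scaleR_of_nat:
  fixes \<phi> :: "real \<Rightarrow> 'a::real_vector"
  assumes add: "\<And>s s'. 0 \<le> s \<Longrightarrow> 0 \<le> s' \<Longrightarrow> s + s' \<le> p \<Longrightarrow> \<phi> (s + s') = \<phi> s + \<phi> s'"
    and "0 \<le> s" "real j * s \<le> p"
  shows "\<phi> (real j * s) = real j *\<^sub>R \<phi> s"
  using assms(3)
proof (induction j)
  case 0 then show ?case using add[of 0 0] by simp
next
  case (Suc j)
  have "real j * s \<le> real (Suc j) * s" using assms(2) by (simp add: mult_right_mono)
  then have "\<phi> (real j * s) = real j *\<^sub>R \<phi> s" using Suc by simp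
  moreover have "\<phi> (real (Suc j) * s) = \<phi> s + \<phi> (real j * s)"
    using add[of s "real j * s"] Suc.prems assms(2) by (simp add: algebra_simps)
  ultimately show ?case by (simp add: algebra_simps)
qed

(* The deviation from linearity vanishes on the grid of mesh p / n and is O(sqrt (p / n)) in between. *)
lemma additive_on_interval_sqrt_bounded_linear:
  fixes \<phi> :: "real \<Rightarrow> 'a::real_normed_vector"
  assumes add: "\<And>s s'. 0 \<le> s \<Longrightarrow> 0 \<le> s' \<Longrightarrow> s + s' \<le> p \<Longrightarrow> \<phi> (s + s') = \<phi> s + \<phi> s'"
    and bound: "\<And>s. 0 \<le> s \<Longrightarrow> s \<le> p \<Longrightarrow> norm (\<phi> s) \<le> K * sqrt s"
    and a: "0 \<le> a" "a \<le> p"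
  shows "\<phi> a = (a / p) *\<^sub>R \<phi> p"
proof (cases "p = 0")
  case True then show ?thesis using add[of 0 0] a by simp
next
  case False
  then have p: "0 < p" using a by simp
  define \<psi> where "\<psi> s = \<phi> s - (s / p) *\<^sub>R \<phi> p" for s
  have \<psi>_add: "\<psi> (s + s') = \<psi> s + \<psi> s'" if "0 \<le> s" "0 \<le> s'" "s + s' \<le> p" for s s'
    using add[OF that] unfolding \<psi>_def by (simp add: add_divide_distrib scaleR_add_left)
  define C where "C = \<bar>K\<bar> + norm (\<phi> p) / sqrt p"
  have \<psi>_bound: "norm (\<psi> s) \<le> C * sqrt s" if "0 \<le> s" "s \<le> p" for s
  proof -
    have "s / p = sqrt (s / p) * sqrt (s / p)" using that p by simp
    also have "\<dots> \<le> sqrt (s / p)" using that p by (intro mult_left_le) auto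
    also have "\<dots> = sqrt s / sqrt p" by (rule real_sqrt_divide)
    finally have "s / p \<le> sqrt s / sqrt p" .
    then have "(s / p) * norm (\<phi> p) \<le> (sqrt s / sqrt p) * norm (\<phi> p)"
      by (rule mult_right_mono) simp
    moreover have "K * sqrt s \<le> \<bar>K\<bar> * sqrt s" using that by (intro mult_right_mono) auto
    moreover have "norm (\<psi> s) \<le> K * sqrt s + (s / p) * norm (\<phi> p)"
      unfolding \<psi>_def using bound[OF that] that p by (intro norm_triangle_le_diff) simp
    ultimately show ?thesis unfolding C_def by (simp add: algebra_simps)
  qed
  have \<psi>_grid: "\<psi> (real j * (p / n)) = 0" if "n > 0" "j \<le> n" for j n :: nat
  proof -
    have "real n *\<^sub>R \<psi> (p / n) = \<psi> p"
      using additive_on_interval_scaleR_of_nat[where \<phi>=\<psi> and p=p and s="p / n" and j=n] \<psi>_add p that by simp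
    moreover have "\<psi> p = 0" unfolding \<psi>_def using p by simp
    ultimately have "\<psi> (p / n) = 0" using that by simp
    then show ?thesis
      using additive_on_interval_scaleR_of_nat[where \<phi>=\<psi> and p=p and s="p / n" and j=j] \<psi>_add p that
      by (simp add: field_simps)
  qed
  have "norm (\<psi> a) \<le> C * sqrt (p / n)" if "n > 0" for n :: nat
  proof -
    define j where "j = nat \<lfloor>a * n / p\<rfloor>"
    have "0 \<le> a * n / p" using a p by simp
    then have "real j \<le> a * n / p" "a * n / p < real j + 1" unfolding j_def by linarith+
    then have j: "real j * (p / n) \<le> a" "a < real j * (p / n) + p / n"
      using p that by (simp_all add: field_simps)
    have "j \<le> n"
    proof -
      have "real j * p \<le> a * n" using j(1) that by (simp add: field_simps)
      also have "\<dots> \<le> real n * p" using a by (simp add: mult.commute mult_right_mono)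
      finally have "real j * p \<le> real n * p" .
      then show ?thesis using p by simp
    qed
    define r where "r = a - real j * (p / n)"
    have "0 \<le> real j * (p / n)" using p by simp
    then have r: "0 \<le> r" "r \<le> p / n" "r \<le> p" using j a unfolding r_def by linarith+
    have "\<psi> a = \<psi> (real j * (p / n)) + \<psi> r"
      using \<psi>_add[of "real j * (p / n)" r] j a p unfolding r_def by simp
    then have "\<psi> a = \<psi> r" using \<psi>_grid[OF that \<open>j \<le> n\<close>] by simp
    also have "norm \<dots> \<le> C * sqrt r" using r by (intro \<psi>_bound)
    also have "\<dots> \<le> C * sqrt (p / n)" using r unfolding C_def by (intro mult_left_mono) auto
    finally show ?thesis .
  qed
  moreover have "(\<lambda>n. C * sqrt (p / real n)) \<longlonglongrightarrow> C * sqrt 0"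
    by (intro tendsto_intros)
  ultimately have "norm (\<psi> a) \<le> 0"
    by (intro LIMSEQ_le_const) (auto intro!: exI[of _ 1])
  then show ?thesis unfolding \<psi>_def by simp
qed

lemma (in finite_measure) atomless_additive_measure_invariant_proportional:
  fixes g :: "'a set \<Rightarrow> 'b::real_normed_vector"
  assumes atomless: "atomless M" and B: "B \<in> sets M"
    and invariant: "\<And>C C'. C \<in> sets M \<Longrightarrow> C' \<in> sets M \<Longrightarrow> C \<subseteq> B \<Longrightarrow> C' \<subseteq> B \<Longrightarrow>
      measure M C = measure M C' \<Longrightarrow> g C = g C'"
    and add: "\<And>C C'. C \<in> sets M \<Longrightarrow> C' \<in> sets M \<Longrightarrow> C \<inter> C' = {} \<Longrightarrow> g (C \<union> C') = g C + g C'"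
    and bound: "\<And>C. C \<in> sets M \<Longrightarrow> norm (g C) \<le> K * sqrt (measure M C)"
    and C: "C \<in> sets M" "C \<subseteq> B"
  shows "g C = (measure M C / measure M B) *\<^sub>R g B"
proof -
  define \<phi> where "\<phi> s = g (SOME C. C \<in> sets M \<and> C \<subseteq> B \<and> measure M C = s)" for s
  have exists: "\<exists>C. C \<in> sets M \<and> C \<subseteq> B \<and> measure M C = s" if "0 \<le> s" "s \<le> measure M B" for s
    using atomless_exists_subset_measure[OF atomless B that] by metis
  have \<phi>: "\<phi> (measure M C) = g C" if "C \<in> sets M" "C \<subseteq> B" for C
  proof -
    have "\<exists>C'. C' \<in> sets M \<and> C' \<subseteq> B \<and> measure M C' = measure M C"
      using that by (intro exists) (auto intro: finite_measure_mono B)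
    from someI_ex[OF this] show ?thesis unfolding \<phi>_def using that by (intro invariant) auto
  qed
  have "\<phi> (s + s') = \<phi> s + \<phi> s'" if s: "0 \<le> s" "0 \<le> s'" "s + s' \<le> measure M B" for s s'
  proof -
    obtain D where D: "D \<in> sets M" "D \<subseteq> B" "measure M D = s + s'" using exists[of "s + s'"] s by auto
    obtain E where E: "E \<in> sets M" "E \<subseteq> D" "measure M E = s"
      using atomless_exists_subset_measure[OF atomless D(1), of s] s D by auto
    have "measure M (D - E) = s'" using finite_measure_Diff D E by simp
    moreover have "g D = g E + g (D - E)" using add[of E "D - E"] D E by (simp add: Un_absorb1)
    ultimately show ?thesis using \<phi> D E by (metis Diff_subset order.trans sets.Diff)
  qed
  moreover have "norm (\<phi> s) \<le> K * sqrt s" if "0 \<le> s" "s \<le> measure M B" for s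
    using exists[OF that] bound \<phi> by metis
  ultimately have "\<phi> (measure M C) = (measure M C / measure M B) *\<^sub>R \<phi> (measure M B)"
    using C B by (intro additive_on_interval_sqrt_bounded_linear) (auto intro: finite_measure_mono)
  then show ?thesis using \<phi> C B by simp
qed

section \<open>Square-integrable functions and bounded linear maps on them\<close>

lemma memL2_zero: "memL2 M (\<lambda>w. 0)"
  unfolding memL2_def by simp

lemma memL2_indicator_scaleR:
  fixes u :: "'h::{real_normed_vector, second_countable_topology}"
  assumes "finite_measure M" "A \<in> sets M"
  shows "memL2 M (\<lambda>w. indicator A w *\<^sub>R u)"
proof -
  interpret finite_measure M by fact
  have "integrable M (\<lambda>w. (norm (indicator A w *\<^sub>R u))\<^sup>2)"
    by (rule integrable_const_bound[where B="(norm u)\<^sup>2"]) (use assms in \<open>auto simp: indicator_def\<close>)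
  moreover have "(\<lambda>w. indicator A w *\<^sub>R u) \<in> borel_measurable M" using assms(2) by measurable
  ultimately show ?thesis unfolding memL2_def by simp
qed

lemma memL2_add:
  fixes Y Z :: "'w \<Rightarrow> 'h::{real_normed_vector, second_countable_topology}"
  assumes "memL2 M Y" "memL2 M Z"
  shows "memL2 M (\<lambda>w. Y w + Z w)"
  unfolding memL2_def
proof
  show m: "(\<lambda>w. Y w + Z w) \<in> borel_measurable M" using assms unfolding memL2_def by auto
  have i: "integrable M (\<lambda>w. 2 * (norm (Y w))\<^sup>2 + 2 * (norm (Z w))\<^sup>2)"
    using assms unfolding memL2_def by auto
  show "integrable M (\<lambda>w. (norm (Y w + Z w))\<^sup>2)"
  proof (rule Bochner_Integration.integrable_bound[OF i])
    show "(\<lambda>w. (norm (Y w + Z w))\<^sup>2) \<in> borel_measurable M" using m by measurable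
    show "AE w in M. norm ((norm (Y w + Z w))\<^sup>2) \<le> norm (2 * (norm (Y w))\<^sup>2 + 2 * (norm (Z w))\<^sup>2)"
    proof (rule AE_I2)
      fix w
      have "norm (Y w + Z w) \<le> norm (Y w) + norm (Z w)" by (rule norm_triangle_ineq)
      then have "(norm (Y w + Z w))\<^sup>2 \<le> (norm (Y w) + norm (Z w))\<^sup>2" by (intro power_mono) auto
      also have "\<dots> \<le> 2 * (norm (Y w))\<^sup>2 + 2 * (norm (Z w))\<^sup>2"
        by (smt (verit, del_insts) sum_squares_bound power2_sum)
      finally show "norm ((norm (Y w + Z w))\<^sup>2) \<le> norm (2 * (norm (Y w))\<^sup>2 + 2 * (norm (Z w))\<^sup>2)"
        by simp
    qed
  qed
qed

lemma memL2_scaleR: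
  assumes "memL2 M Y"
  shows "memL2 M (\<lambda>w. c *\<^sub>R Y w)"
proof -
  have "(\<lambda>w. (norm (c *\<^sub>R Y w))\<^sup>2) = (\<lambda>w. c\<^sup>2 * (norm (Y w))\<^sup>2)"
    by (simp add: power_mult_distrib)
  then show ?thesis using assms unfolding memL2_def by auto
qed

lemma memL2_diff:
  fixes Y Z :: "'w \<Rightarrow> 'h::{real_normed_vector, second_countable_topology}"
  assumes "memL2 M Y" "memL2 M Z"
  shows "memL2 M (\<lambda>w. Y w - Z w)"
  using memL2_add[OF assms(1) memL2_scaleR[OF assms(2), of "-1"]] by simp

lemma memL2_sum:
  fixes Y :: "'i \<Rightarrow> 'w \<Rightarrow> 'h::{real_normed_vector, second_countable_topology}"
  shows "(\<And>i. i \<in> I \<Longrightarrow> memL2 M (Y i)) \<Longrightarrow> memL2 M (\<lambda>w. \<Sum>i\<in>I. Y i w)"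
proof (induction I rule: infinite_finite_induct)
  case (insert i I)
  then have "memL2 M (\<lambda>w. Y i w + (\<Sum>i\<in>I. Y i w))" by (intro memL2_add) auto
  with insert.hyps show ?case by simp
qed (simp_all add: memL2_zero)

lemma memL2_AE_cong:
  assumes "memL2 M Z" "Y \<in> borel_measurable M" "AE w in M. Y w = Z w"
  shows "memL2 M Y"
  using assms unfolding memL2_def
  by (subst integrable_cong_AE[where g="\<lambda>w. (norm (Z w))\<^sup>2"]) (auto elim: AE_mp)

lemma l2norm_eq_0_AE:
  assumes "AE w in M. Y w = 0"
  shows "l2norm M Y = 0"
proof -
  have "(\<integral>w. (norm (Y w))\<^sup>2 \<partial>M) = 0"
    by (rule integral_eq_zero_AE) (use assms in \<open>auto elim: AE_mp\<close>)
  then show ?thesis unfolding l2norm_def by simp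
qed

lemma l2norm_scaleR: "l2norm M (\<lambda>w. c *\<^sub>R Y w) = \<bar>c\<bar> * l2norm M Y"
  unfolding l2norm_def by (simp add: power_mult_distrib real_sqrt_mult)

lemma l2norm_indicator_scaleR:
  fixes u :: "'h::real_normed_vector"
  assumes "finite_measure M" "A \<in> sets M"
  shows "l2norm M (\<lambda>w. indicator A w *\<^sub>R u) = norm u * sqrt (measure M A)"
proof -
  interpret finite_measure M by fact
  have "(\<lambda>w. (norm (indicator A w *\<^sub>R u))\<^sup>2) = (\<lambda>w. indicator A w * (norm u)\<^sup>2)"
    by (auto simp: indicator_def)
  then have "(\<integral>w. (norm (indicator A w *\<^sub>R u))\<^sup>2 \<partial>M) = measure M A * (norm u)\<^sup>2"
    using assms(2) by simp
  then show ?thesis unfolding l2norm_def by (simp add: real_sqrt_mult)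
qed

lemma step_fun_conv_sum: "step_fun xs = (\<lambda>w. \<Sum>i<length xs. indicator (fst (xs ! i)) w *\<^sub>R snd (xs ! i))"
  unfolding step_fun_def by (simp add: fun_eq_iff sum_list_sum_nth case_prod_beta atLeast0LessThan)

lemma memL2_step_fun:
  fixes xs :: "('w set \<times> 'h::{real_normed_vector, second_countable_topology}) list"
  assumes "finite_measure M" "step_rep M xs"
  shows "memL2 M (step_fun xs)"
  using assms unfolding step_rep_def step_fun_conv_sum by (intro memL2_sum memL2_indicator_scaleR) auto

context
  fixes M :: "'w measure"
    and L :: "('w \<Rightarrow> 'h::{real_normed_vector, second_countable_topology}) \<Rightarrow> 'u::real_normed_vector"
  assumes L: "bounded_linear_L2 M L"
begin

lemma bounded_linear_L2_add: "memL2 M Y \<Longrightarrow> memL2 M Z \<Longrightarrow> L (\<lambda>w. Y w + Z w) = L Y + L Z"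
  using L unfolding bounded_linear_L2_def by blast

lemma bounded_linear_L2_scaleR: "memL2 M Y \<Longrightarrow> L (\<lambda>w. c *\<^sub>R Y w) = c *\<^sub>R L Y"
  using L unfolding bounded_linear_L2_def by blast

lemma bounded_linear_L2_bound: obtains K where "\<And>Y. memL2 M Y \<Longrightarrow> norm (L Y) \<le> K * l2norm M Y"
  using L unfolding bounded_linear_L2_def by blast

lemma bounded_linear_L2_diff: "memL2 M Y \<Longrightarrow> memL2 M Z \<Longrightarrow> L (\<lambda>w. Y w - Z w) = L Y - L Z"
  using bounded_linear_L2_add[of Y "\<lambda>w. (-1) *\<^sub>R Z w"] bounded_linear_L2_scaleR[of Z "-1"]
    memL2_scaleR[of M Z "-1"] by simp

lemma bounded_linear_L2_zero: "L (\<lambda>w. 0) = 0"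
  using bounded_linear_L2_scaleR[OF memL2_zero, of 0] by simp

lemma bounded_linear_L2_sum:
  fixes Y :: "'i \<Rightarrow> 'w \<Rightarrow> 'h"
  shows "(\<And>i. i \<in> I \<Longrightarrow> memL2 M (Y i)) \<Longrightarrow> L (\<lambda>w. \<Sum>i\<in>I. Y i w) = (\<Sum>i\<in>I. L (Y i))"
proof (induction I rule: infinite_finite_induct)
  case (insert i I)
  have Yi: "memL2 M (Y i)" and YI: "\<And>j. j \<in> I \<Longrightarrow> memL2 M (Y j)" using insert.prems by auto
  have "L (\<lambda>w. \<Sum>i\<in>insert i I. Y i w) = L (\<lambda>w. Y i w + (\<Sum>i\<in>I. Y i w))"
    using insert.hyps by simp
  also have "\<dots> = L (Y i) + L (\<lambda>w. \<Sum>i\<in>I. Y i w)"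
    using Yi memL2_sum[OF YI] by (rule bounded_linear_L2_add)
  also have "\<dots> = L (Y i) + (\<Sum>i\<in>I. L (Y i))" by (simp only: insert.IH[OF YI])
  finally show ?case using insert.hyps by simp
qed (simp_all add: bounded_linear_L2_zero)

lemma bounded_linear_L2_AE_cong:
  assumes "memL2 M Y" "memL2 M Z" "AE w in M. Y w = Z w"
  shows "L Y = L Z"
proof -
  obtain K where "\<And>Y. memL2 M Y \<Longrightarrow> norm (L Y) \<le> K * l2norm M Y"
    using bounded_linear_L2_bound by blast
  moreover have "l2norm M (\<lambda>w. Y w - Z w) = 0" using assms(3) by (intro l2norm_eq_0_AE) auto
  ultimately have "L (\<lambda>w. Y w - Z w) = 0" using memL2_diff[OF assms(1,2)] by fastforce
  then show ?thesis using bounded_linear_L2_diff[OF assms(1,2)] by simp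
qed

lemma step_int_eq_bounded_linear_L2:
  assumes "finite_measure M" "step_rep M xs"
  shows "step_int L xs = L (step_fun xs)"
proof -
  have "step_int L xs = (\<Sum>i<length xs. L (\<lambda>w. indicator (fst (xs ! i)) w *\<^sub>R snd (xs ! i)))"
    unfolding step_int_def vmeasure_def by (simp add: sum_list_sum_nth case_prod_beta atLeast0LessThan)
  also have "\<dots> = L (\<lambda>w. \<Sum>i<length xs. indicator (fst (xs ! i)) w *\<^sub>R snd (xs ! i))"
    using assms unfolding step_rep_def
    by (intro bounded_linear_L2_sum[symmetric] memL2_indicator_scaleR) auto
  finally show ?thesis unfolding step_fun_conv_sum .
qed

end

section \<open>Laws of shifted random variables and lifted derivatives\<close>

lemma (in finite_measure) measure_preimage_shift_on_level_set:
  fixes X :: "'a \<Rightarrow> 'h::{real_normed_vector, second_countable_topology}" and b :: 'h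
  defines "B \<equiv> X -` {b} \<inter> space M"
  assumes X: "X \<in> borel_measurable M" and A: "A \<in> sets M" "A \<subseteq> B" and S: "S \<in> sets borel"
  shows "measure M ((\<lambda>w. X w + indicator A w *\<^sub>R v) -` S \<inter> space M) =
    measure M (X -` S \<inter> space M - B) + (if b + v \<in> S then measure M A else 0)
      + (if b \<in> S then measure M B - measure M A else 0)"
proof -
  have B: "B \<in> sets M" unfolding B_def using measurable_sets[OF X, of "{b}"] by simp
  define R where "R = X -` S \<inter> space M - B"
  define E1 where "E1 = (if b + v \<in> S then A else {})"
  define E2 where "E2 = (if b \<in> S then B - A else {})"
  have sets: "R \<in> sets M" "E1 \<in> sets M" "E2 \<in> sets M"
    unfolding R_def E1_def E2_def using measurable_sets[OF X S] A B by auto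
  have "w \<in> (\<lambda>w. X w + indicator A w *\<^sub>R v) -` S \<inter> space M \<longleftrightarrow> w \<in> R \<union> E1 \<union> E2" for w
    using A unfolding R_def E1_def E2_def B_def by (cases "w \<in> A") auto
  then have "(\<lambda>w. X w + indicator A w *\<^sub>R v) -` S \<inter> space M = R \<union> E1 \<union> E2" by blast
  moreover have "measure M (R \<union> E1 \<union> E2) = measure M R + measure M E1 + measure M E2"
    using sets A by (subst finite_measure_Union; auto simp: R_def E1_def E2_def)+
  moreover have "measure M E2 = (if b \<in> S then measure M B - measure M A else 0)"
    unfolding E2_def using finite_measure_Diff[OF B A] by simp
  ultimately show ?thesis unfolding R_def E1_def by simp
qed

lemma (in finite_measure) distr_shift_on_level_set_eq:
  fixes X :: "'a \<Rightarrow> 'h::{real_normed_vector, second_countable_topology}"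
  assumes X: "X \<in> borel_measurable M"
    and A: "A1 \<in> sets M" "A2 \<in> sets M" "A1 \<subseteq> X -` {b} \<inter> space M" "A2 \<subseteq> X -` {b} \<inter> space M"
    and eq: "measure M A1 = measure M A2"
  shows "distr M borel (\<lambda>w. X w + indicator A1 w *\<^sub>R v) = distr M borel (\<lambda>w. X w + indicator A2 w *\<^sub>R v)"
proof (rule measure_eqI)
  fix S assume "S \<in> sets (distr M borel (\<lambda>w. X w + indicator A1 w *\<^sub>R v))"
  then have S: "S \<in> sets borel" by simp
  have m: "(\<lambda>w. X w + indicator A w *\<^sub>R v) \<in> borel_measurable M" if "A \<in> sets M" for A
    using that X by measurable
  show "emeasure (distr M borel (\<lambda>w. X w + indicator A1 w *\<^sub>R v)) S =
      emeasure (distr M borel (\<lambda>w. X w + indicator A2 w *\<^sub>R v)) S"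
    unfolding emeasure_distr[OF m[OF A(1)] S] emeasure_distr[OF m[OF A(2)] S] emeasure_eq_measure
    by (simp only: measure_preimage_shift_on_level_set[OF X A(1) A(3) S]
        measure_preimage_shift_on_level_set[OF X A(2) A(4) S] eq)
qed simp

(* f only sees laws, so both t L Y1 and t L Y2 approximate the same increment of f. *)
lemma lift_frechet_eq_if_distr_eq:
  assumes frechet: "lift_frechet M f X L" and Y: "memL2 M Y1" "memL2 M Y2"
    and distr_eq: "\<And>t. 0 < t \<Longrightarrow> distr M borel (\<lambda>w. X w + t *\<^sub>R Y1 w) = distr M borel (\<lambda>w. X w + t *\<^sub>R Y2 w)"
  shows "L Y1 = L Y2"
proof -
  have L: "bounded_linear_L2 M L" using frechet unfolding lift_frechet_def by blast
  define R where "R = l2norm M Y1 + l2norm M Y2"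
  have R: "0 \<le> l2norm M Y1" "0 \<le> l2norm M Y2" "0 \<le> R" unfolding R_def l2norm_def by simp_all
  have estimate: "norm (L Y1 - L Y2) \<le> e * R" if "e > 0" for e
  proof -
    obtain d where "d > 0" and d: "\<And>Y. memL2 M Y \<Longrightarrow> l2norm M Y < d \<Longrightarrow>
        norm (f (distr M borel (\<lambda>w. X w + Y w)) - f (distr M borel X) - L Y) \<le> e * l2norm M Y"
      using frechet \<open>e > 0\<close> unfolding lift_frechet_def by blast
    define t where "t = d / (R + 1)"
    have "t > 0" unfolding t_def using \<open>d > 0\<close> R by simp
    have "t * R < d" unfolding t_def using \<open>d > 0\<close> R by (simp add: field_simps)
    define F where "F = f (distr M borel (\<lambda>w. X w + t *\<^sub>R Y1 w)) - f (distr M borel X)"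
    have close: "norm (F - t *\<^sub>R L Y) \<le> e * (t * l2norm M Y)"
      if "memL2 M Y" "distr M borel (\<lambda>w. X w + t *\<^sub>R Y w) = distr M borel (\<lambda>w. X w + t *\<^sub>R Y1 w)"
        "l2norm M Y \<le> R" for Y
    proof -
      have tY: "l2norm M (\<lambda>w. t *\<^sub>R Y w) = t * l2norm M Y" using \<open>t > 0\<close> by (simp add: l2norm_scaleR)
      have "t * l2norm M Y \<le> t * R" using \<open>t > 0\<close> that(3) by simp
      then have "norm (f (distr M borel (\<lambda>w. X w + t *\<^sub>R Y w)) - f (distr M borel X) - L (\<lambda>w. t *\<^sub>R Y w))
          \<le> e * l2norm M (\<lambda>w. t *\<^sub>R Y w)"
        using memL2_scaleR[OF that(1)] \<open>t * R < d\<close> tY by (intro d) auto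
      then show ?thesis
        unfolding F_def that(2) tY bounded_linear_L2_scaleR[OF L that(1)] .
    qed
    have "t * norm (L Y1 - L Y2) = norm ((F - t *\<^sub>R L Y2) - (F - t *\<^sub>R L Y1))"
      using \<open>t > 0\<close> by (simp add: algebra_simps flip: scaleR_diff_right)
    also have "\<dots> \<le> norm (F - t *\<^sub>R L Y2) + norm (F - t *\<^sub>R L Y1)" by (rule norm_triangle_ineq4)
    also have "\<dots> \<le> e * (t * l2norm M Y2) + e * (t * l2norm M Y1)"
      using close[OF Y(1)] close[OF Y(2)] distr_eq[OF \<open>t > 0\<close>] R unfolding R_def
      by (intro add_mono) auto
    also have "\<dots> = t * (e * R)" unfolding R_def by (simp add: algebra_simps)
    finally show ?thesis using \<open>t > 0\<close> by simp
  qed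
  have "norm (L Y1 - L Y2) \<le> 0 + e" if "e > 0" for e
  proof -
    have "norm (L Y1 - L Y2) \<le> e / (R + 1) * R" using \<open>e > 0\<close> R by (intro estimate) simp
    also have "\<dots> \<le> e" using \<open>e > 0\<close> R by (simp add: field_simps)
    finally show ?thesis by simp
  qed
  then show ?thesis using field_le_epsilon[of "norm (L Y1 - L Y2)" 0] by simp
qed

lemma (in finite_measure) lift_frechet_indicator_level_set_proportional:
  fixes X :: "'a \<Rightarrow> 'h::{real_normed_vector, second_countable_topology}" and b u :: 'h
  defines "B \<equiv> X -` {b} \<inter> space M"
  assumes atomless: "atomless M" and frechet: "lift_frechet M f X L" and X: "X \<in> borel_measurable M"
    and C: "C \<in> sets M" "C \<subseteq> B"
  shows "L (\<lambda>w. indicator C w *\<^sub>R u) = (measure M C / measure M B) *\<^sub>R L (\<lambda>w. indicator B w *\<^sub>R u)"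
proof -
  have L: "bounded_linear_L2 M L" using frechet unfolding lift_frechet_def by blast
  have fm: "finite_measure M" by unfold_locales
  have B: "B \<in> sets M" unfolding B_def using measurable_sets[OF X, of "{b}"] by simp
  obtain K where K: "\<And>Y. memL2 M Y \<Longrightarrow> norm (L Y) \<le> K * l2norm M Y"
    using bounded_linear_L2_bound[OF L] by blast
  show ?thesis
  proof (rule atomless_additive_measure_invariant_proportional[OF atomless B _ _ _ C, where K="K * norm u"])
    fix C1 C2 assume C12: "C1 \<in> sets M" "C2 \<in> sets M" "C1 \<subseteq> B" "C2 \<subseteq> B" "measure M C1 = measure M C2"
    show "L (\<lambda>w. indicator C1 w *\<^sub>R u) = L (\<lambda>w. indicator C2 w *\<^sub>R u)"
    proof (rule lift_frechet_eq_if_distr_eq[OF frechet])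
      fix t :: real
      show "distr M borel (\<lambda>w. X w + t *\<^sub>R (indicator C1 w *\<^sub>R u)) =
          distr M borel (\<lambda>w. X w + t *\<^sub>R (indicator C2 w *\<^sub>R u))"
        using distr_shift_on_level_set_eq[OF X C12(1,2) _ _ C12(5), of b "t *\<^sub>R u"] C12(3,4)
        unfolding B_def by (simp add: mult.commute)
    qed (use C12 fm in \<open>auto intro: memL2_indicator_scaleR\<close>)
  next
    fix C1 C2 assume C12: "C1 \<in> sets M" "C2 \<in> sets M" "C1 \<inter> C2 = {}"
    then have "(\<lambda>w. indicator (C1 \<union> C2) w *\<^sub>R u) = (\<lambda>w. indicator C1 w *\<^sub>R u + indicator C2 w *\<^sub>R u)"
      by (auto simp: indicator_def fun_eq_iff)
    then show "L (\<lambda>w. indicator (C1 \<union> C2) w *\<^sub>R u) = L (\<lambda>w. indicator C1 w *\<^sub>R u) + L (\<lambda>w. indicator C2 w *\<^sub>R u)"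
      using bounded_linear_L2_add[OF L memL2_indicator_scaleR[OF fm C12(1)] memL2_indicator_scaleR[OF fm C12(2)]]
      by simp
  next
    fix C assume C: "C \<in> sets M"
    have "norm (L (\<lambda>w. indicator C w *\<^sub>R u)) \<le> K * l2norm M (\<lambda>w. indicator C w *\<^sub>R u)"
      by (rule K) (rule memL2_indicator_scaleR[OF fm C])
    also have "l2norm M (\<lambda>w. indicator C w *\<^sub>R u) = norm u * sqrt (measure M C)"
      by (rule l2norm_indicator_scaleR[OF fm C])
    finally show "norm (L (\<lambda>w. indicator C w *\<^sub>R u)) \<le> K * norm u * sqrt (measure M C)"
      by (simp add: mult.assoc)
  qed
qed

section \<open>Random variables with finitely many values\<close>

(* P(A | X = y), which is 0 when P(X = y) = 0 by the convention x / 0 = 0. *)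
definition cond_prob_at :: "'a measure \<Rightarrow> ('a \<Rightarrow> 'b) \<Rightarrow> 'a set \<Rightarrow> 'b \<Rightarrow> real" where
  "cond_prob_at M X A y = measure M (A \<inter> (X -` {y} \<inter> space M)) / measure M (X -` {y} \<inter> space M)"

lemma AE_indicator_eq_sum_level_sets:
  assumes "finite S" "AE w in M. X w \<in> S"
  shows "AE w in M. indicator A w = (\<Sum>y\<in>S. indicator (A \<inter> (X -` {y} \<inter> space M)) w :: real)"
  using assms(2) AE_space
proof eventually_elim
  case (elim w)
  then have "(\<Sum>y\<in>S. indicator (A \<inter> (X -` {y} \<inter> space M)) w :: real) =
      (\<Sum>y\<in>S. if y = X w then indicator A w else 0)"
    by (intro sum.cong) (auto simp: indicator_def)
  then show ?case using assms(1) elim by simp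
qed

lemma (in finite_measure) lift_frechet_indicator_finite_range:
  fixes X :: "'a \<Rightarrow> 'h::{real_normed_vector, second_countable_topology}" and u :: 'h
  assumes atomless: "atomless M" and frechet: "lift_frechet M f X L" and X: "X \<in> borel_measurable M"
    and S: "finite S" "AE w in M. X w \<in> S" and A: "A \<in> sets M"
  shows "L (\<lambda>w. indicator A w *\<^sub>R u) =
    L (\<lambda>w. (\<Sum>y\<in>S. cond_prob_at M X A y * indicator (X -` {y} \<inter> space M) w) *\<^sub>R u)"
proof -
  have L: "bounded_linear_L2 M L" using frechet unfolding lift_frechet_def by blast
  have fm: "finite_measure M" by unfold_locales
  define B where "B y = X -` {y} \<inter> space M" for y
  have B: "B y \<in> sets M" for y unfolding B_def using measurable_sets[OF X, of "{y}"] by simp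
  have "AE w in M. indicator A w *\<^sub>R u = (\<Sum>y\<in>S. indicator (A \<inter> B y) w *\<^sub>R u)"
    using AE_indicator_eq_sum_level_sets[OF S, of A] unfolding B_def
    by eventually_elim (simp add: scaleR_sum_left)
  then have "L (\<lambda>w. indicator A w *\<^sub>R u) = L (\<lambda>w. \<Sum>y\<in>S. indicator (A \<inter> B y) w *\<^sub>R u)"
    using A B by (intro bounded_linear_L2_AE_cong[OF L] memL2_sum memL2_indicator_scaleR[OF fm]) auto
  also have "\<dots> = (\<Sum>y\<in>S. L (\<lambda>w. indicator (A \<inter> B y) w *\<^sub>R u))"
    using A B by (intro bounded_linear_L2_sum[OF L] memL2_indicator_scaleR[OF fm]) auto
  also have "\<dots> = (\<Sum>y\<in>S. L (\<lambda>w. (cond_prob_at M X A y * indicator (B y) w) *\<^sub>R u))"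
  proof (intro sum.cong refl)
    fix y
    have "L (\<lambda>w. indicator (A \<inter> B y) w *\<^sub>R u) = cond_prob_at M X A y *\<^sub>R L (\<lambda>w. indicator (B y) w *\<^sub>R u)"
      unfolding cond_prob_at_def B_def
      by (rule lift_frechet_indicator_level_set_proportional[OF atomless frechet X]) (use A B B_def in auto)
    also have "\<dots> = L (\<lambda>w. (cond_prob_at M X A y * indicator (B y) w) *\<^sub>R u)"
      using bounded_linear_L2_scaleR[OF L memL2_indicator_scaleR[OF fm B]] by simp
    finally show "L (\<lambda>w. indicator (A \<inter> B y) w *\<^sub>R u) = \<dots>" .
  qed
  also have "\<dots> = L (\<lambda>w. \<Sum>y\<in>S. (cond_prob_at M X A y * indicator (B y) w) *\<^sub>R u)"
    using B by (intro bounded_linear_L2_sum[OF L, symmetric])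
      (auto simp flip: scaleR_scaleR intro!: memL2_scaleR memL2_indicator_scaleR[OF fm])
  finally show ?thesis unfolding B_def by (simp add: scaleR_sum_left)
qed

lemma (in finite_measure) real_cond_exp_indicator_finite_range:
  fixes X :: "'a \<Rightarrow> 'h::{real_normed_vector, second_countable_topology}"
  assumes X: "X \<in> borel_measurable M" and S: "finite S" "AE w in M. X w \<in> S" and A: "A \<in> sets M"
  shows "AE w in M. real_cond_exp M (vimage_algebra (space M) X borel) (indicator A) w =
    (\<Sum>y\<in>S. cond_prob_at M X A y * indicator (X -` {y} \<inter> space M) w)"
proof -
  define F where "F = vimage_algebra (space M) X borel"
  define B where "B y = X -` {y} \<inter> space M" for y
  have sets_F: "sets F = {X -` T \<inter> space M | T. T \<in> sets borel}"
    unfolding F_def by (rule sets_vimage_algebra2) simp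
  have "subalgebra M F"
    unfolding subalgebra_def
  proof
    show "space F = space M" unfolding F_def by simp
    show "sets F \<subseteq> sets M" unfolding sets_F using measurable_sets[OF X] by auto
  qed
  then interpret finite_measure_subalgebra M F by unfold_locales
  have B_F: "B y \<in> sets F" for y unfolding F_def B_def by (rule in_vimage_algebra) simp
  then have B: "B y \<in> sets M" for y using subalg unfolding subalgebra_def by auto
  have int: "integrable M (indicator E :: 'a \<Rightarrow> real)" if "E \<in> sets M" for E
    using that by (simp add: less_top[symmetric])
  have integral_level_sets: "(\<integral>w. indicator E w \<partial>M) = (\<Sum>y\<in>S. measure M (E \<inter> B y))" if "E \<in> sets M" for E
  proof -
    have "AE w in M. indicator E w = (\<Sum>y\<in>S. indicator (E \<inter> B y) w :: real)"
      using AE_indicator_eq_sum_level_sets[OF S] unfolding B_def .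
    then have "(\<integral>w. indicator E w \<partial>M) = (\<integral>w. (\<Sum>y\<in>S. indicator (E \<inter> B y) w) \<partial>M :: real)"
      using that B by (intro integral_cong_AE) auto
    also have "\<dots> = (\<Sum>y\<in>S. measure M (E \<inter> B y))"
      using that B by (simp add: Bochner_Integration.integral_sum int)
    finally show ?thesis .
  qed
  have "AE w in M. real_cond_exp M F (indicator A) w = (\<Sum>y\<in>S. cond_prob_at M X A y * indicator (B y) w)"
  proof (rule real_cond_exp_charact)
    fix E assume "E \<in> sets F"
    then obtain T where T: "T \<in> sets borel" "E = X -` T \<inter> space M" unfolding sets_F by auto
    then have E: "E \<in> sets M" using measurable_sets[OF X] by simp
    have E_B: "E \<inter> C \<inter> B y = (if y \<in> T then C \<inter> B y else {})" for C y unfolding T(2) B_def by auto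
    have "(\<integral>w\<in>E. indicator A w \<partial>M) = (\<integral>w. indicator (E \<inter> A) w \<partial>M :: real)"
      unfolding set_lebesgue_integral_def
      by (intro Bochner_Integration.integral_cong refl) (simp add: indicator_inter_arith)
    also have "\<dots> = (\<Sum>y\<in>S. measure M (E \<inter> A \<inter> B y))" using E A by (intro integral_level_sets) auto
    also have "\<dots> = (\<Sum>y\<in>S. cond_prob_at M X A y * measure M (E \<inter> space M \<inter> B y))"
    proof (intro sum.cong refl)
      fix y
      have "measure M (A \<inter> B y) \<le> measure M (B y)" using A B by (intro finite_measure_mono) auto
      then have "cond_prob_at M X A y * measure M (B y) = measure M (A \<inter> B y)"
        using measure_nonneg[of M "A \<inter> B y"] unfolding cond_prob_at_def B_def
        by (cases "measure M (X -` {y} \<inter> space M) = 0") auto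
      moreover have "space M \<inter> B y = B y" using B sets.sets_into_space by blast
      ultimately show "measure M (E \<inter> A \<inter> B y) = cond_prob_at M X A y * measure M (E \<inter> space M \<inter> B y)"
        unfolding E_B by simp
    qed
    also have "\<dots> = (\<integral>w. (\<Sum>y\<in>S. cond_prob_at M X A y * indicator (E \<inter> B y) w) \<partial>M)"
      using E B by (simp add: Bochner_Integration.integral_sum int Int_assoc)
    also have "\<dots> = (\<integral>w\<in>E. (\<Sum>y\<in>S. cond_prob_at M X A y * indicator (B y) w) \<partial>M)"
      unfolding set_lebesgue_integral_def
      by (intro Bochner_Integration.integral_cong refl) (simp add: sum_distrib_left indicator_inter_arith mult_ac)
    finally show "(\<integral>w\<in>E. indicator A w \<partial>M) = (\<integral>w\<in>E. (\<Sum>y\<in>S. cond_prob_at M X A y * indicator (B y) w) \<partial>M)" .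
  qed (use A B B_F int in auto)
  then show ?thesis unfolding F_def B_def .
qed

lemma step_fun_exists_sum:
  assumes "finite S" "\<And>y. y \<in> S \<Longrightarrow> B y \<in> sets M" "disjoint_family_on B S"
  obtains xs where "step_rep M xs" "step_fun xs = (\<lambda>w. \<Sum>y\<in>S. indicator (B y) w *\<^sub>R v y)"
proof -
  obtain ys where ys: "set ys = S" "distinct ys" using finite_distinct_list[OF assms(1)] by blast
  define xs where "xs = map (\<lambda>y. (B y, v y)) ys"
  have "step_fun xs = (\<lambda>w. \<Sum>y\<in>S. indicator (B y) w *\<^sub>R v y)"
    unfolding step_fun_def xs_def using ys by (simp add: fun_eq_iff o_def sum_list_distinct_conv_sum_set)
  moreover have "step_rep M xs"
    unfolding step_rep_def
  proof
    show "\<forall>i<length xs. fst (xs ! i) \<in> sets M" unfolding xs_def using assms(2) ys by auto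
    have "B (ys ! i) \<inter> B (ys ! j) = {}" if "i < length ys" "j < length ys" "i \<noteq> j" for i j
      using assms(3) ys that nth_eq_iff_index_eq[OF ys(2) that(1,2)] nth_mem[OF that(1)] nth_mem[OF that(2)]
      unfolding disjoint_family_on_def by auto
    then show "disjoint_family_on (\<lambda>i. fst (xs ! i)) {..<length xs}"
      unfolding xs_def disjoint_family_on_def by auto
  qed
  ultimately show ?thesis using that by blast
qed

lemma vm_integral_eq_if_AE_step_fun:
  fixes Y :: "'w \<Rightarrow> 'h::{real_normed_vector, second_countable_topology}"
  assumes fm: "finite_measure M" and L: "bounded_linear_L2 M L" and xs: "step_rep M xs"
    and Y: "Y \<in> borel_measurable M" "AE w in M. Y w = step_fun xs w"
  shows "vm_integral M L Y = L Y"
proof -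
  have memY: "memL2 M Y" using memL2_AE_cong[OF memL2_step_fun[OF fm xs] Y] .
  have LY: "L Y = step_int L xs"
    using bounded_linear_L2_AE_cong[OF L memY memL2_step_fun[OF fm xs] Y(2)]
      step_int_eq_bounded_linear_L2[OF L fm xs] by simp
  obtain K where K: "\<And>Z. memL2 M Z \<Longrightarrow> norm (L Z) \<le> K * l2norm M Z"
    using bounded_linear_L2_bound[OF L] by blast
  have "(\<lambda>n. step_int L (Ys n)) \<longlonglongrightarrow> L Y"
    if Ys: "\<And>n. step_rep M (Ys n)" and lim: "(\<lambda>n. l2norm M (\<lambda>w. step_fun (Ys n) w - Y w)) \<longlonglongrightarrow> 0" for Ys
  proof -
    have "norm (step_int L (Ys n) - L Y) \<le> K * l2norm M (\<lambda>w. step_fun (Ys n) w - Y w)" for n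
    proof -
      have "step_int L (Ys n) - L Y = L (\<lambda>w. step_fun (Ys n) w - Y w)"
        using bounded_linear_L2_diff[OF L memL2_step_fun[OF fm Ys] memY]
          step_int_eq_bounded_linear_L2[OF L fm Ys] by simp
      then show ?thesis using K[OF memL2_diff[OF memL2_step_fun[OF fm Ys] memY]] by simp
    qed
    then have "(\<lambda>n. step_int L (Ys n) - L Y) \<longlonglongrightarrow> 0"
      by (rule Lim_null_comparison[OF always_eventually[OF allI]]) (rule tendsto_mult_right_zero[OF lim])
    then show ?thesis by (simp add: LIM_zero_iff)
  qed
  then have "\<forall>Ys. (\<forall>n. step_rep M (Ys n)) \<longrightarrow>
      (\<lambda>n. l2norm M (\<lambda>w. step_fun (Ys n) w - Y w)) \<longlonglongrightarrow> 0 \<longrightarrow>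
      (AE w in M. (\<lambda>n. step_fun (Ys n) w) \<longlonglongrightarrow> Y w) \<longrightarrow>
      (\<lambda>n. step_int L (Ys n)) \<longlonglongrightarrow> L Y"
    by simp
  moreover have "v = L Y" if "\<forall>Ys. (\<forall>n. step_rep M (Ys n)) \<longrightarrow>
      (\<lambda>n. l2norm M (\<lambda>w. step_fun (Ys n) w - Y w)) \<longlonglongrightarrow> 0 \<longrightarrow>
      (AE w in M. (\<lambda>n. step_fun (Ys n) w) \<longlonglongrightarrow> Y w) \<longrightarrow>
      (\<lambda>n. step_int L (Ys n)) \<longlonglongrightarrow> v" for v
  proof -
    have "l2norm M (\<lambda>w. step_fun xs w - Y w) = 0" using Y(2) by (intro l2norm_eq_0_AE) auto
    moreover have "AE w in M. (\<lambda>n. step_fun xs w) \<longlonglongrightarrow> Y w" using Y(2) by eventually_elim simp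
    ultimately have "(\<lambda>n. step_int L xs) \<longlonglongrightarrow> v" using that[rule_format, of "\<lambda>n. xs"] xs by simp
    then show ?thesis by (simp add: LY LIMSEQ_const_iff)
  qed
  ultimately show ?thesis unfolding vm_integral_def by (rule the_equality)
qed

lemma (in finite_measure) AE_in_atoms_of_finite_law:
  fixes X :: "'a \<Rightarrow> 'h::t1_space"
  assumes X: "X \<in> borel_measurable M" and "finite K"
    and law: "\<And>B. B \<in> sets borel \<Longrightarrow> measure (distr M borel X) B = (\<Sum>k\<in>K. p k * indicator B (x k))"
  shows "AE w in M. X w \<in> x ` K"
proof -
  have co: "- (x ` K) \<in> sets borel" using \<open>finite K\<close> by (simp add: borel_open open_Compl finite_imp_closed)
  have "measure M (X -` (- (x ` K)) \<inter> space M) = measure (distr M borel X) (- (x ` K))"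
    by (rule measure_distr[OF X co, symmetric])
  also have "\<dots> = 0" by (simp add: law[OF co])
  finally have "emeasure M (X -` (- (x ` K)) \<inter> space M) = 0" by (simp add: emeasure_eq_measure)
  then show ?thesis by (rule AE_I[rotated]) (use measurable_sets[OF X co] in auto)
qed

lemma (in finite_measure) vm_integral_cond_exp_indicator_finite_range:
  fixes X :: "'a \<Rightarrow> 'h::{real_normed_vector, second_countable_topology}" and u :: 'h
  assumes L: "bounded_linear_L2 M L" and X: "X \<in> borel_measurable M"
    and S: "finite S" "AE w in M. X w \<in> S" and A: "A \<in> sets M"
  shows "vm_integral M L (\<lambda>w. real_cond_exp M (vimage_algebra (space M) X borel) (indicator A) w *\<^sub>R u) =
    L (\<lambda>w. (\<Sum>y\<in>S. cond_prob_at M X A y * indicator (X -` {y} \<inter> space M) w) *\<^sub>R u)"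
    (is "vm_integral M L ?Y = L ?h")
proof -
  have fm: "finite_measure M" by unfold_locales
  have "X -` {y} \<inter> space M \<in> sets M" for y using measurable_sets[OF X] by simp
  moreover have "disjoint_family_on (\<lambda>y. X -` {y} \<inter> space M) S" by (auto simp: disjoint_family_on_def)
  ultimately obtain xs where xs: "step_rep M xs"
    "step_fun xs = (\<lambda>w. \<Sum>y\<in>S. indicator (X -` {y} \<inter> space M) w *\<^sub>R (cond_prob_at M X A y *\<^sub>R u))"
    using step_fun_exists_sum[OF S(1), where M=M and B="\<lambda>y. X -` {y} \<inter> space M"
        and v="\<lambda>y. cond_prob_at M X A y *\<^sub>R u"] by blast
  have step_h: "step_fun xs = ?h" unfolding xs(2) by (simp add: fun_eq_iff scaleR_sum_left mult.commute)
  have Y_eq_h: "AE w in M. ?Y w = ?h w"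
    using real_cond_exp_indicator_finite_range[OF X S A] by eventually_elim simp
  have Y: "?Y \<in> borel_measurable M" by measurable
  have h: "memL2 M ?h" using memL2_step_fun[OF fm xs(1)] unfolding step_h .
  have "vm_integral M L ?Y = L ?Y"
    using Y_eq_h by (intro vm_integral_eq_if_AE_step_fun[OF fm L xs(1) Y]) (simp add: step_h)
  also have "\<dots> = L ?h" by (rule bounded_linear_L2_AE_cong[OF L memL2_AE_cong[OF h Y Y_eq_h] h Y_eq_h])
  finally show ?thesis .
qed

theorem theorem3p3:
  fixes M0 M :: "'w::polish_space measure"
    and f :: "'h::{real_inner, complete_space, second_countable_topology} measure \<Rightarrow> 'u::{real_inner, complete_space, second_countable_topology}"
    and X0 :: "'w \<Rightarrow> 'h"
    and N :: nat and x :: "nat \<Rightarrow> 'h" and p :: "nat \<Rightarrow> real"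
    and L :: "('w \<Rightarrow> 'h) \<Rightarrow> 'u"
    and A :: "'w set" and u :: 'h
  assumes "prob_space M0" and "sets M0 = sets borel" and "M = completion M0"
    and "atomless M"
    and "memL2 M X0"
    and "inj_on x {1..N}"
    and "\<And>k. k \<in> {1..N} \<Longrightarrow> p k > 0"
    and "(\<Sum>k=1..N. p k) = 1"
    and "\<And>B. B \<in> sets borel \<Longrightarrow>
           measure (distr M borel X0) B = (\<Sum>k=1..N. p k * indicator B (x k))"
    and "lift_frechet M f X0 L"
    and "Lambda2 M L"
    and "A \<in> sets M"
  shows "vmeasure L A u =
    vm_integral M L (\<lambda>w. real_cond_exp M (vimage_algebra (space M) X0 borel) (indicator A) w *\<^sub>R u)"
proof -
  interpret M0: prob_space M0 by fact
  interpret prob_space M using M0.prob_space_completion assms(3) by simp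
  have X0: "X0 \<in> borel_measurable M" using assms(5) unfolding memL2_def by simp
  have L: "bounded_linear_L2 M L" using assms(10) unfolding lift_frechet_def by simp
  have S: "finite (x ` {1..N})" "AE w in M. X0 w \<in> x ` {1..N}"
    using AE_in_atoms_of_finite_law[OF X0 _ assms(9)] by simp_all
  have "vmeasure L A u =
      L (\<lambda>w. (\<Sum>y\<in>x ` {1..N}. cond_prob_at M X0 A y * indicator (X0 -` {y} \<inter> space M) w) *\<^sub>R u)"
    unfolding vmeasure_def by (rule lift_frechet_indicator_finite_range[OF assms(4,10) X0 S assms(12)])
  also have "\<dots> = vm_integral M L
      (\<lambda>w. real_cond_exp M (vimage_algebra (space M) X0 borel) (indicator A) w *\<^sub>R u)"
    by (rule vm_integral_cond_exp_indicator_finite_range[OF L X0 S assms(12), symmetric])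
  finally show ?thesis .
qed

end
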